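(* Let $\mathbf{L}$ be a distributive lattice and $n\ge1$ an integer. A subset $F\subseteq\mathbf{L}$ is an $n$-filter if and only if it is an intersection of prime $n$-filters on $\mathbf{L}$ (the empty intersection being $\mathbf{L}$).
   Context: For a set $X$, $Y\subseteq_n X$ means $Y$ is a non-empty subset of $X$ with $|Y|\le n$. An $n$-filter on a lattice is an upset $F$ such that for every non-empty finite $X\subseteq F$: if $\bigwedge Y\in F$ for every $Y\subseteq_n X$ then $\bigwedge X\in F$. A prime $n$-filter is an $n$-filter $F$ such that $a\vee b\in F$ implies $a\in F$ or $b\in F$ (the empty set and $\mathbf{L}$ count as prime $n$-filters). *)

theory Defs
  imports Main
begin

definition upset :: "'a::order set \<Rightarrow> bool" where
  "upset F \<longleftrightarrow> (\<forall>x y. x \<in> F \<longrightarrow> x \<le> y \<longrightarrow> y \<in> F)"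

definition n_filter :: "nat \<Rightarrow> 'a::lattice set \<Rightarrow> bool" where
  "n_filter n F \<longleftrightarrow> upset F \<and>
     (\<forall>X. finite X \<longrightarrow> X \<noteq> {} \<longrightarrow> X \<subseteq> F \<longrightarrow>
        (\<forall>Y. Y \<noteq> {} \<longrightarrow> Y \<subseteq> X \<longrightarrow> card Y \<le> n \<longrightarrow> Inf_fin Y \<in> F) \<longrightarrow>
        Inf_fin X \<in> F)"

definition prime_n_filter :: "nat \<Rightarrow> 'a::lattice set \<Rightarrow> bool" where
  "prime_n_filter n F \<longleftrightarrow> n_filter n F \<and> (\<forall>a b. sup a b \<in> F \<longrightarrow> a \<in> F \<or> b \<in> F)"

end

theory Submission
  imports Defs
begin

text \<open>Intersections of n-filters are n-filters, which gives one direction. Conversely, given an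
n-filter F and a \<notin> F, Zorn's lemma yields an n-filter M \<supseteq> F maximal with a \<notin> M (unions of
chains are n-filters, because the finitely many meets tested for a finite set X all land in a
single member of the chain). M is prime: for every c the preimage {x. c \<squnion> x \<in> M} is again an
n-filter, since c \<squnion> _ preserves finite meets by distributivity; it contains M, so by maximality it
is M itself or contains a. If b \<squnion> c \<in> M with b, c \<notin> M, the first case is excluded by b, so
c \<squnion> a \<in> M, and then symmetrically a \<squnion> a = a \<in> M, a contradiction.\<close>

lemma n_filterI:
  assumes "upset F"
    and "\<And>X. finite X \<Longrightarrow> X \<noteq> {} \<Longrightarrow> X \<subseteq> F \<Longrightarrow>
           (\<And>Y. Y \<noteq> {} \<Longrightarrow> Y \<subseteq> X \<Longrightarrow> card Y \<le> n \<Longrightarrow> Inf_fin Y \<in> F) \<Longrightarrow> Inf_fin X \<in> F"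
  shows "n_filter n F"
  using assms unfolding n_filter_def by blast

lemma n_filter_upset: "n_filter n F \<Longrightarrow> upset F"
  unfolding n_filter_def by blast

lemma n_filterD:
  assumes "n_filter n F" "finite X" "X \<noteq> {}" "X \<subseteq> F"
    and "\<And>Y. Y \<noteq> {} \<Longrightarrow> Y \<subseteq> X \<Longrightarrow> card Y \<le> n \<Longrightarrow> Inf_fin Y \<in> F"
  shows "Inf_fin X \<in> F"
  using assms unfolding n_filter_def by blast

lemma n_filter_Inter:
  assumes "\<And>P. P \<in> \<P> \<Longrightarrow> n_filter n P"
  shows "n_filter n (\<Inter>\<P>)"
proof (rule n_filterI)
  have "upset P" if "P \<in> \<P>" for P
    using assms[OF that] by (rule n_filter_upset)
  then show "upset (\<Inter>\<P>)"
    unfolding upset_def by blast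
  fix X assume X: "finite X" "X \<noteq> {}" "X \<subseteq> \<Inter>\<P>"
    and meets: "\<And>Y. Y \<noteq> {} \<Longrightarrow> Y \<subseteq> X \<Longrightarrow> card Y \<le> n \<Longrightarrow> Inf_fin Y \<in> \<Inter>\<P>"
  show "Inf_fin X \<in> \<Inter>\<P>"
  proof
    fix P assume "P \<in> \<P>"
    show "Inf_fin X \<in> P"
      by (rule n_filterD[OF assms[OF \<open>P \<in> \<P>\<close>] X(1,2)]) (use X(3) meets \<open>P \<in> \<P>\<close> in auto)
  qed
qed

lemma n_filter_Union_chain:
  assumes "\<C> \<noteq> {}" and "subset.chain \<A> \<C>" and "\<And>G. G \<in> \<C> \<Longrightarrow> n_filter n G"
  shows "n_filter n (\<Union>\<C>)"
proof (rule n_filterI)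
  have "upset G" if "G \<in> \<C>" for G
    using assms(3)[OF that] by (rule n_filter_upset)
  then show "upset (\<Union>\<C>)"
    unfolding upset_def by blast
  fix X assume X: "finite X" "X \<noteq> {}" "X \<subseteq> \<Union>\<C>"
    and meets: "\<And>Y. Y \<noteq> {} \<Longrightarrow> Y \<subseteq> X \<Longrightarrow> card Y \<le> n \<Longrightarrow> Inf_fin Y \<in> \<Union>\<C>"
  define Z where "Z = X \<union> Inf_fin ` {Y. Y \<noteq> {} \<and> Y \<subseteq> X \<and> card Y \<le> n}"
  have "finite Z" "Z \<subseteq> \<Union>\<C>"
    unfolding Z_def using X meets by auto
  then obtain G where G: "G \<in> \<C>" "Z \<subseteq> G"
    using finite_subset_Union_chain[OF _ _ assms(1,2)] by metis
  have "Inf_fin X \<in> G"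
    by (rule n_filterD[OF assms(3)[OF G(1)] X(1,2)]) (use G(2) in \<open>auto simp: Z_def image_subset_iff\<close>)
  with G show "Inf_fin X \<in> \<Union>\<C>" by blast
qed

lemma n_filter_sup_preimage:
  fixes c :: "'a::distrib_lattice"
  assumes G: "n_filter n G"
  shows "n_filter n {x. sup c x \<in> G}"
proof (rule n_filterI)
  have sup_Inf_fin: "sup c (Inf_fin Y) = Inf_fin (sup c ` Y)" if "finite Y" "Y \<noteq> {}" for Y
    by (rule Inf_fin.hom_commute[where h = "sup c", OF sup_inf_distrib1 that])
  show "upset {x. sup c x \<in> G}"
    using n_filter_upset[OF G] unfolding upset_def by (metis mem_Collect_eq sup_mono order_refl)
  fix X assume X: "finite X" "X \<noteq> {}" "X \<subseteq> {x. sup c x \<in> G}"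
    and meets: "\<And>Y. Y \<noteq> {} \<Longrightarrow> Y \<subseteq> X \<Longrightarrow> card Y \<le> n \<Longrightarrow> Inf_fin Y \<in> {x. sup c x \<in> G}"
  have "Inf_fin (sup c ` X) \<in> G"
  proof (rule n_filterD[OF G])
    show "finite (sup c ` X)" "sup c ` X \<noteq> {}" "sup c ` X \<subseteq> G" using X by auto
    fix Y' assume Y': "Y' \<noteq> {}" "Y' \<subseteq> sup c ` X" "card Y' \<le> n"
    then obtain Y where Y: "Y \<subseteq> X" "inj_on (sup c) Y" "Y' = sup c ` Y"
      by (meson subset_image_inj)
    have "finite Y" using Y(1) X(1) finite_subset by blast
    moreover have "Y \<noteq> {}" using Y(3) Y'(1) by blast
    moreover have "card Y \<le> n" using card_image[OF Y(2)] Y(3) Y'(3) by simp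
    ultimately have "sup c (Inf_fin Y) \<in> G"
      using meets[of Y] Y(1) by blast
    then show "Inf_fin Y' \<in> G"
      using sup_Inf_fin[OF \<open>finite Y\<close> \<open>Y \<noteq> {}\<close>] Y(3) by simp
  qed
  then show "Inf_fin X \<in> {x. sup c x \<in> G}"
    using sup_Inf_fin[OF X(1,2)] by simp
qed

lemma prime_n_filter_if_maximal_avoiding:
  fixes M :: "'a::distrib_lattice set"
  assumes M: "n_filter n M" "a \<notin> M"
    and maximal: "\<And>G. n_filter n G \<Longrightarrow> M \<subseteq> G \<Longrightarrow> a \<notin> G \<Longrightarrow> G = M"
  shows "prime_n_filter n M"
  unfolding prime_n_filter_def
proof (intro conjI allI impI M(1))
  have sup_absorb: "sup c a \<in> M" if "sup c b \<in> M" "b \<notin> M" for b c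
  proof (rule ccontr)
    assume "sup c a \<notin> M"
    moreover have "M \<subseteq> {x. sup c x \<in> M}"
      using n_filter_upset[OF M(1)] unfolding upset_def by (auto intro: sup_ge2)
    ultimately have "{x. sup c x \<in> M} = M"
      using maximal n_filter_sup_preimage[OF M(1)] by auto
    with that show False by auto
  qed
  fix b c assume "sup b c \<in> M"
  show "b \<in> M \<or> c \<in> M"
  proof (rule ccontr)
    assume "\<not> (b \<in> M \<or> c \<in> M)"
    then have "b \<notin> M" "c \<notin> M" by auto
    have "sup c b \<in> M"
      using \<open>sup b c \<in> M\<close> by (simp add: sup.commute)
    then have "sup c a \<in> M"
      using sup_absorb \<open>b \<notin> M\<close> by blast
    then have "sup a c \<in> M"
      by (simp add: sup.commute)
    then have "sup a a \<in> M"
      using sup_absorb \<open>c \<notin> M\<close> by blast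
    with M(2) show False by simp
  qed
qed

lemma ex_prime_n_filter_separating:
  fixes F :: "'a::distrib_lattice set"
  assumes F: "n_filter n F" and a: "a \<notin> F"
  shows "\<exists>P. prime_n_filter n P \<and> F \<subseteq> P \<and> a \<notin> P"
proof -
  define \<A> where "\<A> = {G. n_filter n G \<and> F \<subseteq> G \<and> a \<notin> G}"
  have "\<exists>M\<in>\<A>. \<forall>G\<in>\<A>. M \<subseteq> G \<longrightarrow> G = M"
  proof (rule subset_Zorn_nonempty)
    show "\<A> \<noteq> {}" using F a unfolding \<A>_def by blast
    fix \<C> assume "\<C> \<noteq> {}" and chain: "subset.chain \<A> \<C>"
    then have \<C>: "\<C> \<subseteq> \<A>" by (simp add: subset.chain_def)
    have "n_filter n (\<Union>\<C>)"
      by (rule n_filter_Union_chain[OF \<open>\<C> \<noteq> {}\<close> chain]) (use \<C> in \<open>auto simp: \<A>_def\<close>)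
    moreover have "F \<subseteq> \<Union>\<C>" "a \<notin> \<Union>\<C>"
      using \<C> \<open>\<C> \<noteq> {}\<close> unfolding \<A>_def by auto
    ultimately show "\<Union>\<C> \<in> \<A>" unfolding \<A>_def by blast
  qed
  then obtain M where "M \<in> \<A>" and maximal: "\<And>G. G \<in> \<A> \<Longrightarrow> M \<subseteq> G \<Longrightarrow> G = M"
    by blast
  then have M: "n_filter n M" "F \<subseteq> M" "a \<notin> M" unfolding \<A>_def by auto
  have "prime_n_filter n M"
  proof (rule prime_n_filter_if_maximal_avoiding[OF M(1,3)])
    fix G assume "n_filter n G" "M \<subseteq> G" "a \<notin> G"
    with M(2) have "G \<in> \<A>" unfolding \<A>_def by blast
    then show "G = M" using \<open>M \<subseteq> G\<close> by (rule maximal)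
  qed
  with M show ?thesis by blast
qed

theorem mainTheorem10:
  fixes n :: nat and F :: "'a::distrib_lattice set"
  assumes "n \<ge> 1"
  shows "n_filter n F \<longleftrightarrow>
    (\<exists>\<P>. (\<forall>P\<in>\<P>. prime_n_filter n P) \<and> F = \<Inter>\<P>)"
proof
  assume F: "n_filter n F"
  let ?\<P> = "{P. prime_n_filter n P \<and> F \<subseteq> P}"
  have "\<Inter>?\<P> \<subseteq> F"
  proof
    fix a assume "a \<in> \<Inter>?\<P>"
    then show "a \<in> F"
      using ex_prime_n_filter_separating[OF F, of a] by blast
  qed
  moreover have "F \<subseteq> \<Inter>?\<P>" by blast
  ultimately show "\<exists>\<P>. (\<forall>P\<in>\<P>. prime_n_filter n P) \<and> F = \<Inter>\<P>"
    by (intro exI[of _ ?\<P>]) auto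
next
  assume "\<exists>\<P>. (\<forall>P\<in>\<P>. prime_n_filter n P) \<and> F = \<Inter>\<P>"
  then obtain \<P> where "\<And>P. P \<in> \<P> \<Longrightarrow> prime_n_filter n P" and "F = \<Inter>\<P>" by blast
  then show "n_filter n F"
    using n_filter_Inter[of \<P> n] by (simp add: prime_n_filter_def)
qed

end
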